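(* Let $q\ge 2$ be an integer, and let $\Gamma=(V,E)$ be a complete digraph on $\lceil 2q\ln q\rceil$ vertices with weights $w(e)\in\mathbb{Z}_q$ on its edges. Then $\Gamma$ contains a directed cycle $C$ whose total weight $\sum_{e\in C} w(e)$ is $0$ in $\mathbb{Z}_q$.
   Context: A complete digraph is a digraph in which every ordered pair $(u,v)$ of distinct vertices is joined by exactly one directed edge from $u$ to $v$ (so each pair of vertices is connected by one edge in each direction). Directed cycles may have length $2$. *)

theory Defs
  imports Complex_Main "HOL-Number_Theory.Cong"
begin

text \<open>In the complete digraph on vertex set V every ordered pair (u,v) of distinct
vertices is an edge.\<close>

definition dcycle_complete :: "'a set \<Rightarrow> 'a list \<Rightarrow> bool" where
  "dcycle_complete V vs \<longleftrightarrow> distinct vs \<and> length vs \<ge> 2 \<and> set vs \<subseteq> V"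

definition cycle_weight :: "('a \<Rightarrow> 'a \<Rightarrow> int) \<Rightarrow> 'a list \<Rightarrow> int" where
  "cycle_weight w vs = (\<Sum>i<length vs. w (vs ! i) (vs ! ((i + 1) mod length vs)))"

end

theory Submission
  imports Defs "HOL-Library.FuncSet"
begin

(* Label the vertices by residues f : V \<rightarrow> Z/q and call v stuck if no u \<noteq> v has
   f u = f v + w v u. For a uniformly random labeling each vertex is stuck with probability
   (1 - 1/q)^(n-1), and n (1 - 1/q)^(n-1) < 1 for n = \<lceil>2 q ln q\<rceil>; counting labelings
   instead of measuring them, some labeling has no stuck vertex. Following such successors from
   any vertex closes a cycle, along which w is congruent to the differences of f and hence
   telescopes to 0. *)

lemma card_labelings_stuck_at_le:
  fixes w :: "'a \<Rightarrow> 'a \<Rightarrow> int"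
  assumes finV: "finite V" and v: "v \<in> V" and q: "q > 0"
  shows "card {f \<in> V \<rightarrow>\<^sub>E {0..<int q}. \<forall>u\<in>V - {v}. f u \<noteq> (f v + w v u) mod int q}
    \<le> q * (q - 1) ^ (card V - 1)"
proof -
  define Q where "Q = {0..<int q}"
  define B where "B c = PiE V (\<lambda>u. if u = v then {c} else Q - {(c + w v u) mod int q})" for c
  have card_B: "card (B c) = (q - 1) ^ (card V - 1)" for c
  proof -
    have "card (B c) = (\<Prod>u\<in>V. card (if u = v then {c} else Q - {(c + w v u) mod int q}))"
      unfolding B_def using finV by (simp add: card_PiE)
    also have "\<dots> = (\<Prod>u\<in>V - {v}. card (Q - {(c + w v u) mod int q}))"
      using finV v by (simp add: prod.remove)
    also have "\<dots> = (\<Prod>u\<in>V - {v}. q - 1)"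
      using q by (intro prod.cong) (auto simp: Q_def card_Diff_singleton)
    finally show ?thesis
      using finV v by (simp add: card_Diff_singleton)
  qed
  have "f \<in> B (f v)" and "f v \<in> Q"
    if "f \<in> {f \<in> V \<rightarrow>\<^sub>E Q. \<forall>u\<in>V - {v}. f u \<noteq> (f v + w v u) mod int q}" for f
    using that v by (auto simp: B_def PiE_iff)
  then have "{f \<in> V \<rightarrow>\<^sub>E Q. \<forall>u\<in>V - {v}. f u \<noteq> (f v + w v u) mod int q} \<subseteq> (\<Union>c\<in>Q. B c)"
    by blast
  then have "card {f \<in> V \<rightarrow>\<^sub>E Q. \<forall>u\<in>V - {v}. f u \<noteq> (f v + w v u) mod int q}
      \<le> card (\<Union>c\<in>Q. B c)"
    using finV by (intro card_mono) (auto simp: B_def Q_def intro!: finite_PiE)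
  also have "\<dots> \<le> (\<Sum>c\<in>Q. card (B c))"
    by (rule card_UN_le) (simp add: Q_def)
  also have "\<dots> = q * (q - 1) ^ (card V - 1)"
    by (simp add: card_B Q_def)
  finally show ?thesis
    by (simp only: Q_def)
qed

lemma exists_potential_with_successors:
  fixes w :: "'a \<Rightarrow> 'a \<Rightarrow> int"
  assumes finV: "finite V" and q: "q > 0"
    and few_stuck: "card V * q * (q - 1) ^ (card V - 1) < q ^ card V"
  shows "\<exists>f. \<forall>v\<in>V. \<exists>u\<in>V. u \<noteq> v \<and> [w v u = f u - f v] (mod int q)"
proof -
  define F where "F = V \<rightarrow>\<^sub>E {0..<int q}"
  define stuck where
    "stuck v = {f \<in> F. \<forall>u\<in>V - {v}. f u \<noteq> (f v + w v u) mod int q}" for v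
  have "card (\<Union>v\<in>V. stuck v) \<le> (\<Sum>v\<in>V. card (stuck v))"
    by (rule card_UN_le) (rule finV)
  also have "\<dots> \<le> (\<Sum>v\<in>V. q * (q - 1) ^ (card V - 1))"
    unfolding stuck_def F_def using finV q by (intro sum_mono card_labelings_stuck_at_le)
  also have "\<dots> < card F"
    using few_stuck finV by (simp add: F_def card_PiE)
  finally have "\<not> F \<subseteq> (\<Union>v\<in>V. stuck v)"
    by (auto simp: stuck_def dest: subset_antisym)
  then obtain f where "f \<in> F" and not_stuck: "\<forall>v\<in>V. f \<notin> stuck v"
    by blast
  have "\<exists>u\<in>V. u \<noteq> v \<and> [w v u = f u - f v] (mod int q)" if "v \<in> V" for v
  proof -
    obtain u where "u \<in> V" "u \<noteq> v" "f u = (f v + w v u) mod int q"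
      using not_stuck \<open>f \<in> F\<close> \<open>v \<in> V\<close> by (auto simp: stuck_def)
    then show ?thesis
      by (auto simp: cong_def mod_diff_left_eq)
  qed
  then show ?thesis
    by blast
qed

lemma first_repetition:
  fixes s :: "nat \<Rightarrow> 'a"
  assumes "finite V" and "\<And>k. s k \<in> V"
  shows "\<exists>i j. i < j \<and> s i = s j \<and> inj_on s {..<j}"
proof -
  have "\<not> inj_on s {..card V}"
    using card_inj_on_le[of s "{..card V}" V] assms by auto
  then have "\<exists>j. \<exists>i<j. s i = s j"
    unfolding inj_on_def by (metis atMost_iff linorder_neqE_nat)
  then obtain j where "\<exists>i<j. s i = s j" and first: "\<forall>j'<j. \<not> (\<exists>i<j'. s i = s j')"
    unfolding exists_least_iff[of "\<lambda>j. \<exists>i<j. s i = s j"] by blast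
  moreover have "inj_on s {..<j}"
    using first by (intro inj_onI) (metis lessThan_iff linorder_neqE_nat)
  ultimately show ?thesis
    by blast
qed

lemma functional_graph_has_cycle:
  assumes finV: "finite V" and v0: "v0 \<in> V"
    and g: "\<And>v. v \<in> V \<Longrightarrow> g v \<in> V \<and> g v \<noteq> v"
  shows "\<exists>vs. dcycle_complete V vs \<and> (\<forall>k<length vs. vs ! ((k + 1) mod length vs) = g (vs ! k))"
proof -
  define s where "s k = (g ^^ k) v0" for k
  have s_Suc: "s (Suc k) = g (s k)" for k
    by (simp add: s_def)
  have s_in_V: "s k \<in> V" for k
    by (induction k) (use v0 g in \<open>auto simp: s_Suc s_def\<close>)
  obtain i j where "i < j" "s i = s j" and inj: "inj_on s {..<j}"
    using first_repetition[OF finV] s_in_V by blast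
  define L where "L = j - i"
  define vs where "vs = map s [i..<j]"
  have len: "length vs = L" and nth: "\<And>k. k < L \<Longrightarrow> vs ! k = s (i + k)"
    by (simp_all add: vs_def L_def)
  have "L \<noteq> 1"
  proof
    assume "L = 1"
    then have "j = Suc i"
      using \<open>i < j\<close> by (simp add: L_def)
    then have "s j = g (s i)"
      by (simp add: s_Suc)
    then show False
      using g[OF s_in_V[of i]] \<open>s i = s j\<close> by simp
  qed
  then have "L \<ge> 2"
    using \<open>i < j\<close> by (simp add: L_def)
  have "distinct vs"
    unfolding vs_def distinct_map using inj by (auto intro: inj_on_subset)
  then have cycle: "dcycle_complete V vs"
    using \<open>L \<ge> 2\<close> s_in_V by (auto simp: dcycle_complete_def vs_def L_def)
  have "vs ! ((k + 1) mod L) = g (vs ! k)" if "k < L" for k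
  proof (cases "k + 1 < L")
    case True
    then show ?thesis using that by (simp add: nth s_Suc)
  next
    case False
    then have "k + 1 = L" and "j = Suc (i + k)"
      using that \<open>i < j\<close> by (auto simp: L_def)
    then show ?thesis
      using nth[of 0] nth[OF that] \<open>L \<ge> 2\<close> \<open>s i = s j\<close> by (simp add: s_Suc)
  qed
  then show ?thesis
    using cycle len by auto
qed

lemma sum_lessThan_rotate:
  fixes h :: "nat \<Rightarrow> 'b::comm_monoid_add"
  shows "(\<Sum>k<L. h ((k + 1) mod L)) = (\<Sum>k<L. h k)"
proof (cases L)
  case (Suc m)
  have "(\<Sum>k<Suc m. h ((k + 1) mod Suc m)) = (\<Sum>k<m. h (Suc k)) + h 0"
    by (simp add: sum.lessThan_Suc)
  also have "\<dots> = (\<Sum>k<Suc m. h k)"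
    by (simp only: sum.lessThan_Suc_shift add.commute)
  finally show ?thesis
    by (simp add: Suc)
qed simp

lemma cycle_weight_cong_0_if_potential:
  assumes "\<forall>k<length vs.
    [w (vs ! k) (vs ! ((k + 1) mod length vs)) = f (vs ! ((k + 1) mod length vs)) - f (vs ! k)] (mod m)"
  shows "[cycle_weight w vs = 0] (mod m)"
proof -
  have "[cycle_weight w vs =
      (\<Sum>k<length vs. f (vs ! ((k + 1) mod length vs)) - f (vs ! k))] (mod m)"
    unfolding cycle_weight_def using assms by (intro cong_sum) auto
  also have "(\<Sum>k<length vs. f (vs ! ((k + 1) mod length vs)) - f (vs ! k)) = 0"
    using sum_lessThan_rotate[of "\<lambda>k. f (vs ! k)" "length vs"] by (simp add: sum_subtractf)
  finally show ?thesis .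
qed

lemma exists_cycle_cong_0_if_potential_successor:
  assumes finV: "finite V" and "V \<noteq> {}"
    and g: "\<And>v. v \<in> V \<Longrightarrow> g v \<in> V \<and> g v \<noteq> v \<and> [w v (g v) = f (g v) - f v] (mod m)"
  shows "\<exists>vs. dcycle_complete V vs \<and> [cycle_weight w vs = 0] (mod m)"
proof -
  obtain v0 where "v0 \<in> V"
    using \<open>V \<noteq> {}\<close> by blast
  then obtain vs where cycle: "dcycle_complete V vs"
    and successor: "\<forall>k<length vs. vs ! ((k + 1) mod length vs) = g (vs ! k)"
    using functional_graph_has_cycle[OF finV] g by metis
  have "[cycle_weight w vs = 0] (mod m)"
  proof (rule cycle_weight_cong_0_if_potential[where f = f], intro allI impI)
    fix k
    assume "k < length vs"
    then have "vs ! k \<in> V"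
      using cycle nth_mem by (fastforce simp: dcycle_complete_def)
    then show "[w (vs ! k) (vs ! ((k + 1) mod length vs))
        = f (vs ! ((k + 1) mod length vs)) - f (vs ! k)] (mod m)"
      using g successor \<open>k < length vs\<close> by simp
  qed
  with cycle show ?thesis
    by blast
qed

lemma Suc_mult_power_less_power_Suc_from:
  fixes m N0 N :: nat
  assumes "(N0 + 1) * m ^ N0 < (m + 1) ^ N0" and "m \<le> N0 + 1" and "N0 \<le> N"
  shows "(N + 1) * m ^ N < (m + 1) ^ N"
  using \<open>N0 \<le> N\<close>
proof (induction N rule: dec_induct)
  case base
  then show ?case using assms(1) .
next
  case (step N)
  have "(N + 2) * m ^ Suc N = (m * (N + 2)) * m ^ N"
    by (simp add: algebra_simps)
  also have "\<dots> \<le> ((m + 1) * (N + 1)) * m ^ N"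
    using \<open>m \<le> N0 + 1\<close> \<open>N0 \<le> N\<close> by (intro mult_right_mono) (simp_all add: algebra_simps)
  also have "\<dots> = (m + 1) * ((N + 1) * m ^ N)"
    by (simp only: mult.assoc)
  also have "\<dots> < (m + 1) * (m + 1) ^ N"
    using step.IH by (rule mult_strict_left_mono) simp
  finally show ?case by simp
qed

lemma ln_ge_one_minus_inverse:
  fixes x :: real
  assumes "x > 0"
  shows "1 - 1 / x \<le> ln x"
  using ln_le_minus_one[of "1 / x"] assms by (simp add: ln_div)

lemma ln2_ge_seven_twelfths: "7 / 12 \<le> ln (2::real)"
proof -
  have "ln (2::real) = ln (4 / 3) + ln (3 / 2)"
    using ln_mult[of "4 / 3" "3 / 2"] by simp
  moreover have "1 / 4 \<le> ln (4 / 3 :: real)" and "1 / 3 \<le> ln (3 / 2 :: real)"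
    using ln_ge_one_minus_inverse[of "4 / 3"] ln_ge_one_minus_inverse[of "3 / 2"] by simp_all
  ultimately show ?thesis
    by linarith
qed

lemma linear_less_exp:
  fixes q t :: real
  assumes q: "q \<ge> 5" and t: "t \<ge> 2 * ln q - 1 / q"
  shows "q * t + 1 < exp t"
proof -
  have "ln q \<ge> 1 - 1 / q"
    using ln_ge_one_minus_inverse[of q] q by simp
  moreover have "1 / q \<le> 1 / 5"
    using q by (simp add: field_simps)
  ultimately have t_nonneg: "t \<ge> 0"
    using t by linarith
  have "q - 1 / 2 = q * (1 - 1 / (2 * q))"
    using q by (simp add: field_simps)
  also have "\<dots> \<le> q * exp (- (1 / (2 * q)))"
    using q exp_ge_add_one_self[of "- (1 / (2 * q))"] by (intro mult_left_mono) auto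
  also have "\<dots> = exp (ln q) * exp (- (1 / (2 * q)))"
    using q by simp
  also have "\<dots> = exp (ln q - 1 / (2 * q))"
    by (simp only: diff_conv_add_uminus exp_add)
  also have "\<dots> \<le> exp (t / 2)"
    using t by simp
  finally have half_ge_q: "q - 1 / 2 \<le> exp (t / 2)" .
  have half_ge_taylor: "1 + t / 2 + (t / 2)\<^sup>2 / 2 \<le> exp (t / 2)"
    using exp_lower_Taylor_quadratic[of "t / 2"] t_nonneg by simp
  have "(q - 1 / 2) * (1 + t / 2 + (t / 2)\<^sup>2 / 2) - (q * t + 1)
      = 9 / 16 * (t - 22 / 9)\<^sup>2 + 5 / 36 + (q - 5) * ((t - 2)\<^sup>2 + 4) / 8"
    by (simp add: field_simps power2_eq_square)
  also have "\<dots> > 0"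
  proof -
    have "0 \<le> 9 / 16 * (t - 22 / 9)\<^sup>2" and "0 \<le> (q - 5) * ((t - 2)\<^sup>2 + 4) / 8"
      using q by simp_all
    then show ?thesis
      by linarith
  qed
  finally have "q * t + 1 < (q - 1 / 2) * (1 + t / 2 + (t / 2)\<^sup>2 / 2)"
    by simp
  also have "\<dots> \<le> exp (t / 2) * exp (t / 2)"
    using half_ge_q half_ge_taylor q t_nonneg by (intro mult_mono) auto
  also have "\<dots> = exp t"
    by (simp flip: exp_add)
  finally show ?thesis .
qed

lemma Suc_mult_power_less_power_q_ge_5:
  fixes q N :: nat
  assumes q: "q \<ge> 5" and N: "2 * real q * ln (real q) - 1 \<le> real N"
  shows "(N + 1) * (q - 1) ^ N < q ^ N"
proof -
  define t where "t = real N / real q"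
  have "real N = real q * t"
    using q by (simp add: t_def)
  have "(2 * real q * ln (real q) - 1) / real q \<le> t"
    unfolding t_def using N q by (intro divide_right_mono) auto
  then have "t \<ge> 2 * ln (real q) - 1 / real q"
    using q by (simp add: field_simps)
  then have "real (N + 1) < exp t"
    using linear_less_exp[of "real q" t] q \<open>real N = real q * t\<close> by simp
  moreover have "(1 - 1 / real q) ^ N \<le> exp (- t)"
  proof -
    have "(1 - 1 / real q) ^ N \<le> exp (- (1 / real q)) ^ N"
      using q by (intro power_mono) (auto simp: exp_ge_add_one_self[of "- (1 / real q)", simplified])
    also have "\<dots> = exp (- t)"
      by (simp add: t_def flip: exp_of_nat_mult)
    finally show ?thesis .
  qed
  ultimately have "real (N + 1) * (1 - 1 / real q) ^ N < exp t * exp (- t)"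
    by (intro mult_less_le_imp_less) (use q in auto)
  then have "real (N + 1) * (1 - 1 / real q) ^ N * real q ^ N < 1 * real q ^ N"
    using q by (intro mult_strict_right_mono) (auto simp: exp_minus)
  moreover have "real (N + 1) * (1 - 1 / real q) ^ N * real q ^ N = real ((N + 1) * (q - 1) ^ N)"
    using q by (simp add: of_nat_diff field_simps flip: power_mult_distrib)
  ultimately have "real ((N + 1) * (q - 1) ^ N) < real (q ^ N)"
    by simp
  then show ?thesis
    by (simp only: of_nat_less_iff)
qed

(* For q \<le> 4 the estimate linear_less_exp is too weak; there the inequality is checked
   numerically at a base point and propagated upwards. *)
lemma Suc_mult_power_less_power_of_ge_2q_ln_q:
  fixes q N :: nat
  assumes q: "q \<ge> 2" and N: "2 * real q * ln (real q) - 1 \<le> real N"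
  shows "(N + 1) * (q - 1) ^ N < q ^ N"
proof -
  have from_base: "(N + 1) * (q - 1) ^ N < q ^ N"
    if base: "(N0 + 1) * (q - 1) ^ N0 < q ^ N0" and "q \<le> N0 + 2"
      and "real N0 < 2 * real q * ln (real q)" for N0
  proof -
    have "N0 \<le> N"
      using that(3) N by linarith
    then show ?thesis
      using Suc_mult_power_less_power_Suc_from[of N0 "q - 1" N] base that(2) q by simp
  qed
  note ln2 = ln2_ge_seven_twelfths
  have "3 * ln 2 < 2 * ln (3::real)"
    using ln_realpow[of 2 3] ln_realpow[of 3 2] ln_less_cancel_iff[of 8 9] by simp
  with ln2 have ln3: "5 / 6 < ln (3::real)"
    by linarith
  consider "q = 2" | "q = 3" | "q = 4" | "q \<ge> 5"
    using q by linarith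
  then show ?thesis
  proof cases
    case 1
    then show ?thesis using ln2 by (intro from_base[of 2]) simp_all
  next
    case 2
    then show ?thesis using ln3 by (intro from_base[of 5]) simp_all
  next
    case 3
    have "ln (4::real) = 2 * ln 2"
      using ln_realpow[of 2 2] by simp
    with 3 show ?thesis using ln2 by (intro from_base[of 9]) simp_all
  next
    case 4
    then show ?thesis using Suc_mult_power_less_power_q_ge_5 N by blast
  qed
qed

lemma ceiling_2q_ln_q_mult_power_less_power:
  fixes q n :: nat
  assumes q: "q \<ge> 2" and n: "n = nat \<lceil>2 * real q * ln (real q)\<rceil>"
  shows "n * q * (q - 1) ^ (n - 1) < q ^ n"
proof -
  define N where "N = n - 1"
  have "0 < 2 * real q * ln (real q)"
    using q by simp
  then have "n = N + 1"
    unfolding N_def n by linarith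
  then have "2 * real q * ln (real q) - 1 \<le> real N"
    using real_nat_ceiling_ge[of "2 * real q * ln (real q)"] n by simp
  then have "q * ((N + 1) * (q - 1) ^ N) < q * q ^ N"
    using Suc_mult_power_less_power_of_ge_2q_ln_q q by simp
  moreover have "n * q * (q - 1) ^ (n - 1) = q * ((N + 1) * (q - 1) ^ N)" and "q ^ n = q * q ^ N"
    by (simp_all add: \<open>n = N + 1\<close> algebra_simps)
  ultimately show ?thesis
    by simp
qed

theorem lemma4:
  fixes q :: nat and V :: "'a set" and w :: "'a \<Rightarrow> 'a \<Rightarrow> int"
  assumes "q \<ge> 2"
    and "finite V"
    and "card V = nat \<lceil>2 * real q * ln (real q)\<rceil>"
  shows "\<exists>vs. dcycle_complete V vs \<and> [cycle_weight w vs = 0] (mod int q)"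
proof -
  have "card V * q * (q - 1) ^ (card V - 1) < q ^ card V"
    using ceiling_2q_ln_q_mult_power_less_power assms(1,3) .
  then obtain f where "\<forall>v\<in>V. \<exists>u\<in>V. u \<noteq> v \<and> [w v u = f u - f v] (mod int q)"
    using exists_potential_with_successors[OF assms(2)] assms(1) by fastforce
  then obtain g where g: "\<And>v. v \<in> V \<Longrightarrow> g v \<in> V \<and> g v \<noteq> v \<and> [w v (g v) = f (g v) - f v] (mod int q)"
    by metis
  have "card V > 0"
    using assms(1,3) by simp
  then have "V \<noteq> {}"
    by auto
  then show ?thesis
    using exists_cycle_cong_0_if_potential_successor[OF assms(2)] g by blast
qed

end
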